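(* There are infinitely many odd integers $n$ such that $\varphi(2^n-1)/(2^n-1)>1/3$, where $\varphi$ is Euler's totient function. *)

theory Defs
  imports "HOL-Number_Theory.Number_Theory"
begin

end

theory Submission
  imports Defs
begin

text \<open>
  For an odd prime \<open>p\<close>, every prime factor \<open>q\<close> of \<open>2^p - 1\<close> satisfies \<open>q \<equiv> 1 (mod 2p)\<close>,
  because \<open>2\<close> has order \<open>p\<close> modulo \<open>q\<close>. Hence \<open>2^p - 1\<close> has fewer than \<open>p\<close> prime factors,
  all at least \<open>2p + 1\<close>, and \<open>\<phi>(m)/m = \<Prod>(1 - 1/q) \<ge> 1 - \<Sum>1/q > 1 - p/(2p + 1) > 1/2\<close>.
  Letting \<open>p\<close> range over the infinitely many odd primes gives the claim.
\<close>

lemma prod_one_minus_ge_one_minus_sum: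
  fixes x :: "'a \<Rightarrow> 'b::linordered_idom"
  assumes "finite A" "\<And>a. a \<in> A \<Longrightarrow> 0 \<le> x a \<and> x a \<le> 1"
  shows "1 - (\<Sum>a\<in>A. x a) \<le> (\<Prod>a\<in>A. 1 - x a)"
  using assms
proof (induction A rule: finite_induct)
  case empty
  then show ?case by simp
next
  case (insert b A)
  have xb: "0 \<le> x b" "x b \<le> 1" and sum_nonneg: "0 \<le> (\<Sum>a\<in>A. x a)"
    using insert.prems by (auto intro: sum_nonneg)
  have "1 - (x b + (\<Sum>a\<in>A. x a)) \<le> (1 - x b) * (1 - (\<Sum>a\<in>A. x a))"
    using xb sum_nonneg by (simp add: algebra_simps)
  also have "\<dots> \<le> (1 - x b) * (\<Prod>a\<in>A. 1 - x a)"
    using insert xb by (intro mult_left_mono) auto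
  finally show ?case using insert.hyps by simp
qed

lemma totient_ratio_ge_one_minus_sum:
  assumes "n \<noteq> 0"
  shows "1 - (\<Sum>p\<in>prime_factors n. 1 / real p) \<le> real (totient n) / real n"
proof -
  have "real (totient n) / real n = (\<Prod>p\<in>prime_factors n. 1 - 1 / real p)"
    using assms by (simp add: totient_formula2)
  moreover have "1 - (\<Sum>p\<in>prime_factors n. 1 / real p) \<le> (\<Prod>p\<in>prime_factors n. 1 - 1 / real p)"
  proof (rule prod_one_minus_ge_one_minus_sum)
    fix p assume "p \<in> prime_factors n"
    then have "1 \<le> p"
      by (meson in_prime_factors_imp_prime prime_ge_1_nat)
    then show "0 \<le> 1 / real p \<and> 1 / real p \<le> 1"
      by simp
  qed simp
  ultimately show ?thesis by simp
qed

lemma two_pow_card_prime_factors_le: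
  fixes n :: nat
  assumes "n \<noteq> 0"
  shows "2 ^ card (prime_factors n) \<le> n"
proof -
  have "2 ^ card (prime_factors n) = (\<Prod>q\<in>prime_factors n. 2::nat)"
    by simp
  also have "\<dots> \<le> (\<Prod>q\<in>prime_factors n. q ^ multiplicity q n)"
  proof (intro prod_mono conjI)
    fix q assume q: "q \<in> prime_factors n"
    then have "2 \<le> q" by (auto intro: prime_ge_2_nat)
    also have "q \<le> q ^ multiplicity q n"
      using q \<open>2 \<le> q\<close> by (intro self_le_power) (auto simp: prime_factors_multiplicity)
    finally show "2 \<le> q ^ multiplicity q n" .
  qed simp
  also have "\<dots> = n"
    using prod_prime_factors[OF assms] by simp
  finally show ?thesis .
qed

lemma prime_dvd_pow_prime_minus_one:
  fixes a p q :: nat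
  assumes "prime p" "prime q" "q dvd a ^ p - 1" "\<not> q dvd a - 1"
  shows "p dvd q - 1"
proof -
  have "a \<noteq> 0"
    using assms(4) by (metis dvd_0_right zero_diff)
  then have cong: "[a ^ p = 1] (mod q)"
    using assms(3) by (simp add: cong_altdef_nat)
  have "ord q a dvd p"
    using cong ord_divides by blast
  moreover have "ord q a \<noteq> 1"
    using assms(4) \<open>a \<noteq> 0\<close> by (simp add: ord_eq_Suc_0_iff cong_altdef_nat)
  ultimately have "ord q a = p"
    using assms(1) prime_nat_iff by blast
  moreover have "coprime q a"
  proof -
    have "coprime (a ^ p) q"
      using cong_imp_coprime[OF cong_sym[OF cong]] by simp
    then show ?thesis
      using assms(1) by (simp add: prime_gt_0_nat coprime_commute)
  qed
  ultimately show ?thesis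
    using order_divides_totient assms(2) by (metis totient_prime)
qed

lemma prime_factor_Mersenne_ge:
  fixes p q :: nat
  assumes p: "prime p" "odd p" and q: "q \<in> prime_factors (2 ^ p - 1)"
  shows "2 * p + 1 \<le> q"
proof -
  have "prime q" and q_dvd: "q dvd 2 ^ p - 1"
    using q by auto
  have "odd (2 ^ p - 1 :: nat)"
    using prime_gt_0_nat[OF p(1)] by simp
  then have "odd q"
    using q_dvd dvd_trans by blast
  have "\<not> q dvd 2 - 1"
    using \<open>prime q\<close> by auto
  then have "p dvd q - 1"
    using prime_dvd_pow_prime_minus_one[OF p(1) \<open>prime q\<close> q_dvd] by blast
  moreover have "2 dvd q - 1"
    using \<open>odd q\<close> by (simp add: odd_pos)
  ultimately have "2 * p dvd q - 1"
    using p(2) by (intro divides_mult) auto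
  moreover have "q - 1 \<noteq> 0"
    using \<open>prime q\<close> prime_gt_1_nat by fastforce
  ultimately show ?thesis
    by (auto dest: dvd_imp_le)
qed

lemma totient_ratio_Mersenne_gt_half:
  fixes p :: nat
  assumes p: "prime p" "odd p"
  defines "m \<equiv> 2 ^ p - 1"
  shows "1 / 2 < real (totient m) / real m"
proof -
  let ?P = "prime_factors m"
  have "m \<noteq> 0"
    using one_less_power[of "2::nat" p] p(1) by (simp add: m_def prime_gt_0_nat)
  have "2 ^ card ?P < (2::nat) ^ p"
    using two_pow_card_prime_factors_le[OF \<open>m \<noteq> 0\<close>] \<open>m \<noteq> 0\<close> unfolding m_def by linarith
  then have card_less: "card ?P < p"
    by (simp add: power_strict_increasing_iff)
  have "(\<Sum>q\<in>?P. 1 / real q) \<le> (\<Sum>q\<in>?P. 1 / real (2 * p + 1))"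
  proof (rule sum_mono)
    fix q assume "q \<in> ?P"
    then have "real (2 * p + 1) \<le> real q"
      using prime_factor_Mersenne_ge[OF p] unfolding m_def of_nat_le_iff by blast
    then show "1 / real q \<le> 1 / real (2 * p + 1)"
      by (intro frac_le) simp_all
  qed
  also have "\<dots> = real (card ?P) / real (2 * p + 1)"
    by simp
  also have "\<dots> < 1 / 2"
    using card_less by (simp add: field_simps)
  finally show ?thesis
    using totient_ratio_ge_one_minus_sum[OF \<open>m \<noteq> 0\<close>] by linarith
qed

theorem lemma5p2:
  shows "infinite {n::nat. odd n \<and> real (totient (2 ^ n - 1)) / real (2 ^ n - 1) > 1 / 3}"
proof (rule infinite_super)
  show "{p. prime p} - {2} \<subseteq> {n::nat. odd n \<and> real (totient (2 ^ n - 1)) / real (2 ^ n - 1) > 1 / 3}"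
  proof
    fix p :: nat assume "p \<in> {p. prime p} - {2}"
    then have "prime p" "odd p"
      using prime_odd_nat prime_ge_2_nat by (auto simp: le_less)
    then show "p \<in> {n. odd n \<and> real (totient (2 ^ n - 1)) / real (2 ^ n - 1) > 1 / 3}"
      using totient_ratio_Mersenne_gt_half[of p] by simp
  qed
  show "infinite ({p::nat. prime p} - {2})"
    using primes_infinite by simp
qed

end
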